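(* Let $O$ be a unitary operator and $P$ a self-adjoint projection on a finite-dimensional Hilbert space such that $P(O-\mathrm{Id})=O-\mathrm{Id}$ and $[P,O]=0$. Then for any two density matrices $\rho,\sigma$, $$\sqrt{F}(\rho,\sigma)-\sqrt{F}(\rho,O\sigma O^\dagger)\leq 2\sqrt{\mathrm{tr}(P\rho)\,\mathrm{tr}(P\sigma)}.$$
   Context: $\sqrt{F}(\rho,\sigma)=\mathrm{tr}\sqrt{\rho^{1/2}\sigma\rho^{1/2}}$ is the root fidelity of density matrices. *)

theory Defs
  imports "HOL-Analysis.Analysis"
begin

definition adj :: "complex^'n^'m \<Rightarrow> complex^'m^'n" where
  "adj A = (\<chi> i j. cnj (A $ j $ i))"

definition mtrace :: "complex^'n^'n \<Rightarrow> complex" where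
  "mtrace A = (\<Sum>i\<in>UNIV. A $ i $ i)"

definition unitary :: "complex^'n^'n \<Rightarrow> bool" where
  "unitary U \<longleftrightarrow> adj U ** U = mat 1 \<and> U ** adj U = mat 1"

definition hermitian :: "complex^'n^'n \<Rightarrow> bool" where
  "hermitian A \<longleftrightarrow> adj A = A"

definition psd :: "complex^'n^'n \<Rightarrow> bool" where
  "psd A \<longleftrightarrow> hermitian A \<and>
     (\<forall>x::complex^'n. let q = (\<Sum>i\<in>UNIV. cnj (x $ i) * (A *v x) $ i) in Im q = 0 \<and> 0 \<le> Re q)"

definition density :: "complex^'n^'n \<Rightarrow> bool" where
  "density \<rho> \<longleftrightarrow> psd \<rho> \<and> mtrace \<rho> = 1"

definition proj :: "complex^'n^'n \<Rightarrow> bool" where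
  "proj P \<longleftrightarrow> P ** P = P \<and> adj P = P"

definition msqrt :: "complex^'n^'n \<Rightarrow> complex^'n^'n" where
  "msqrt A = (THE B. psd B \<and> B ** B = A)"

definition root_fid :: "complex^'n^'n \<Rightarrow> complex^'n^'n \<Rightarrow> real" where
  "root_fid \<rho> \<sigma> = Re (mtrace (msqrt (msqrt \<rho> ** \<sigma> ** msqrt \<rho>)))"

end

theory Submission
  imports Defs
begin

text \<open>Write A = msqrt \<rho> and B = msqrt \<sigma>. Both root fidelities are trace norms, of A B and of
  A U B, because (A U B)(A U B)* = A (U \<sigma> U*) A. The trace norm of X is the maximum of
  Re tr (X W) over unitaries W; evaluating both trace norms at the unitary V that is optimal for A B
  bounds the difference by Re tr (A (1 - U) B V). The hypotheses on P give 1 - U = P (1 - U) P, so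
  Cauchy-Schwarz for the Hilbert-Schmidt norm |_| bounds this by
  |A P| |(1 - U) P B V| \<le> 2 |A P| |P B| = 2 sqrt (tr (P \<rho>) tr (P \<sigma>)).
  Square roots and the variational formula for the trace norm rest on the spectral theorem, proved
  by maximising the quadratic form of a Hermitian matrix over unit vectors of invariant subspaces.\<close>

section \<open>Complex inner product\<close>

definition cinner :: "complex^'n \<Rightarrow> complex^'n \<Rightarrow> complex" where
  "cinner x y = (\<Sum>i\<in>UNIV. cnj (x $ i) * y $ i)"

lemma adj_nth [simp]: "adj A $ i $ j = cnj (A $ j $ i)"
  by (simp add: adj_def)

lemma adj_adj [simp]: "adj (adj A) = A"
  by (simp add: vec_eq_iff)

lemma adj_mult: "adj (A ** B) = adj B ** adj A"
  by (simp add: vec_eq_iff matrix_matrix_mult_def mult.commute)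

lemma matrix_diff_ldistrib: "(A::complex^'n^'m) ** (B - C) = A ** B - A ** C"
  by (simp add: vec_eq_iff matrix_matrix_mult_def sum_subtractf right_diff_distrib)

lemma matrix_diff_rdistrib: "((A::complex^'n^'m) - B) ** C = A ** C - B ** C"
  by (simp add: vec_eq_iff matrix_matrix_mult_def sum_subtractf left_diff_distrib)

lemma mtrace_mult_commute:
  fixes A :: "complex^'m^'n" and B :: "complex^'n^'m"
  shows "mtrace (A ** B) = mtrace (B ** A)"
proof -
  have "mtrace (A ** B) = (\<Sum>i\<in>UNIV. \<Sum>k\<in>UNIV. A$i$k * B$k$i)"
    unfolding mtrace_def matrix_matrix_mult_def by simp
  also have "\<dots> = (\<Sum>k\<in>UNIV. \<Sum>i\<in>UNIV. B$k$i * A$i$k)"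
    by (subst sum.swap) (simp only: mult.commute)
  also have "\<dots> = mtrace (B ** A)"
    unfolding mtrace_def matrix_matrix_mult_def by simp
  finally show ?thesis .
qed

lemma mtrace_diff: "mtrace (A - B) = mtrace A - mtrace B"
  by (simp add: mtrace_def sum_subtractf)

lemma cinner_adj: "cinner x (A *v y) = cinner (adj A *v x) y"
proof -
  have "cinner x (A *v y) = (\<Sum>i\<in>UNIV. \<Sum>j\<in>UNIV. cnj (x$i) * A$i$j * y$j)"
    by (simp add: cinner_def matrix_vector_mult_def sum_distrib_left mult.assoc)
  also have "\<dots> = (\<Sum>j\<in>UNIV. (\<Sum>i\<in>UNIV. cnj (x$i) * A$i$j) * y$j)"
    by (subst sum.swap) (simp add: sum_distrib_right)
  also have "\<dots> = cinner (adj A *v x) y"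
    unfolding cinner_def matrix_vector_mult_def by (simp add: mult.commute)
  finally show ?thesis .
qed

lemma cinner_commute: "cinner y x = cnj (cinner x y)"
  unfolding cinner_def cnj_sum by (simp add: mult.commute)

lemma cinner_zero_left [simp]: "cinner 0 y = 0"
  by (simp add: cinner_def)

lemma cinner_zero_right [simp]: "cinner x 0 = 0"
  by (simp add: cinner_def)

lemma cinner_add_right: "cinner x (y + z) = cinner x y + cinner x z"
  by (simp add: cinner_def distrib_left sum.distrib)

lemma cinner_add_left: "cinner (x + y) z = cinner x z + cinner y z"
  by (simp add: cinner_def distrib_right sum.distrib)

lemma cinner_diff_right: "cinner x (y - z) = cinner x y - cinner x z"
  by (simp add: cinner_def right_diff_distrib sum_subtractf)

lemma cinner_scaleR_right: "cinner x (r *\<^sub>R y) = of_real r * cinner x y"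
  unfolding cinner_def vector_scaleR_component scaleR_conv_of_real[where 'a=complex]
  by (simp add: sum_distrib_left mult_ac)

lemma cinner_scaleR_left: "cinner (r *\<^sub>R x) y = of_real r * cinner x y"
  unfolding cinner_def vector_scaleR_component scaleR_conv_of_real[where 'a=complex]
  by (simp add: sum_distrib_left mult_ac)

lemma cinner_scale_left: "cinner (c *s x) y = cnj c * cinner x y"
  by (simp add: cinner_def sum_distrib_left mult_ac)

lemma norm_vec_power2: "(norm (x::'a::real_normed_vector^'n))\<^sup>2 = (\<Sum>i\<in>UNIV. (norm (x$i))\<^sup>2)"
  unfolding norm_vec_def L2_set_def by (simp add: sum_nonneg)

lemma cinner_self: "cinner x x = of_real ((norm x)\<^sup>2)"
  unfolding cinner_def norm_vec_power2 of_real_sum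
  by (intro sum.cong refl) (metis complex_norm_square mult.commute of_real_power)

lemma cinner_self_eq_0: "cinner x x = 0 \<longleftrightarrow> x = 0"
  by (simp add: cinner_self)

lemma cinner_self_eq_1: "cinner x x = 1 \<longleftrightarrow> norm x = 1"
  unfolding cinner_self of_real_eq_1_iff by (smt (verit) norm_ge_zero power2_eq_1_iff)

lemma inner_eq_Re_cinner: "inner x y = Re (cinner x y)"
  by (simp add: inner_vec_def cinner_def inner_complex_def Re_sum)

lemma sum_norm_mult_le:
  fixes x y :: "'a::real_normed_vector^'n"
  shows "(\<Sum>k\<in>UNIV. norm (x$k) * norm (y$k)) \<le> norm x * norm y"
proof -
  let ?a = "(\<chi> k. norm (x$k)) :: real^'n" and ?b = "(\<chi> k. norm (y$k)) :: real^'n"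
  have "inner ?a ?b \<le> norm ?a * norm ?b" by (rule norm_cauchy_schwarz)
  thus ?thesis by (simp add: inner_vec_def norm_vec_def)
qed

lemma norm_cinner_le: "cmod (cinner x y) \<le> norm x * norm y"
proof -
  have "cmod (cinner x y) \<le> (\<Sum>i\<in>UNIV. norm (x $ i) * norm (y $ i))"
    unfolding cinner_def by (rule norm_sum[THEN order_trans]) (simp add: norm_mult)
  also have "\<dots> \<le> norm x * norm y" by (rule sum_norm_mult_le)
  finally show ?thesis .
qed

lemma continuous_on_cinner [continuous_intros]:
  "continuous_on S f \<Longrightarrow> continuous_on S g \<Longrightarrow> continuous_on S (\<lambda>x. cinner (f x) (g x))"
  unfolding cinner_def by (intro continuous_intros)

section \<open>Spectral theorem for Hermitian matrices\<close>

text \<open>Real orthogonality to both v j and \<i> v j is complex orthogonality to v j, and the 2 |J|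
  real vectors v j, \<i> v j cannot span the real space of dimension 2 CARD('n).\<close>
lemma exists_unit_orthogonal:
  fixes v :: "'n::finite \<Rightarrow> complex^'n"
  assumes "J \<noteq> UNIV"
  shows "\<exists>x. cinner x x = 1 \<and> (\<forall>j\<in>J. cinner (v j) x = 0)"
proof -
  define S where "S = v ` J \<union> (\<lambda>j. \<i> *s v j) ` J"
  have "card S \<le> card J + card J"
    unfolding S_def by (rule order_trans[OF card_Un_le add_mono]) (simp_all add: card_image_le)
  moreover have "card J < CARD('n)"
    using assms by (simp add: psubset_card_mono psubset_eq)
  ultimately have "card S < DIM(complex^'n)" by simp
  hence "span S \<noteq> UNIV"
    using dim_le_card[of UNIV S] by (auto simp: S_def)
  then obtain a where a: "a \<noteq> 0" "\<And>x. x \<in> span S \<Longrightarrow> inner a x = 0"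
    using span_not_UNIV_orthogonal by blast
  have "cinner (v j) a = 0" if "j \<in> J" for j
  proof -
    have "inner a (v j) = 0" "inner a (\<i> *s v j) = 0"
      using that a(2) unfolding S_def by (auto intro: span_base)
    hence "Re (cinner (v j) a) = 0" "Re (cinner (\<i> *s v j) a) = 0"
      using cinner_commute[of a "v j"] cinner_commute[of a "\<i> *s v j"]
      by (simp_all add: inner_eq_Re_cinner)
    thus ?thesis by (simp add: cinner_scale_left complex_eq_iff)
  qed
  hence "\<forall>j\<in>J. cinner (v j) (a /\<^sub>R norm a) = 0" by (simp add: cinner_scaleR_right)
  moreover have "cinner (a /\<^sub>R norm a) (a /\<^sub>R norm a) = 1"
    unfolding cinner_self_eq_1 using a(1) by simp
  ultimately show ?thesis by blast
qed

lemma linear_coeff_eq_0_if_quadratic_nonpos: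
  fixes a b :: real
  assumes "\<And>t. 2 * t * a + t\<^sup>2 * b \<le> 0"
  shows "a = 0"
proof -
  define s where "s = 1 / (\<bar>b\<bar> + 1)"
  have s: "0 < s" "-1 \<le> s * b" unfolding s_def by (auto simp: field_simps abs_if)
  have "s * a\<^sup>2 * (2 + s * b) \<le> 0"
    using assms[of "s * a"] by (simp add: algebra_simps power2_eq_square)
  moreover have "0 < 2 + s * b" using s by linarith
  ultimately have "a\<^sup>2 \<le> 0" using s by (simp add: mult_le_0_iff zero_less_mult_iff)
  thus ?thesis by simp
qed

lemma hermitian_cinner: "hermitian A \<Longrightarrow> cinner x (A *v y) = cinner (A *v x) y"
  by (metis cinner_adj hermitian_def)

lemma hermitian_cinner_real:
  assumes "hermitian A" shows "cinner x (A *v x) = of_real (Re (cinner x (A *v x)))"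
proof -
  have "cnj (cinner x (A *v x)) = cinner x (A *v x)"
    using cinner_commute[of "A *v x" x] hermitian_cinner[OF assms, of x x] by simp
  thus ?thesis by (simp add: complex_eq_iff)
qed

lemma matrix_vector_mult_scaleR_complex: "A *v (r *\<^sub>R x) = r *\<^sub>R (A *v (x::complex^'n))"
  by (simp add: linear_scale)

text \<open>Rayleigh principle; max says, in homogeneous form, that x0 maximises the quadratic form
  of A among the unit vectors of S.\<close>
lemma hermitian_max_quadratic_form_eigenvector:
  fixes A :: "complex^'n^'n"
  assumes herm: "hermitian A" and S: "subspace S" and inv: "\<And>x. x \<in> S \<Longrightarrow> A *v x \<in> S"
    and x0: "x0 \<in> S" "cinner x0 x0 = 1"
    and max: "\<And>z. z \<in> S \<Longrightarrow> Re (cinner z (A *v z)) \<le> Re (cinner x0 (A *v x0)) * Re (cinner z z)"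
  shows "A *v x0 = Re (cinner x0 (A *v x0)) *\<^sub>R x0"
proof -
  define \<mu> where "\<mu> = Re (cinner x0 (A *v x0))"
  define y where "y = A *v x0 - \<mu> *\<^sub>R x0"
  have "y \<in> S" unfolding y_def using S inv x0 by (simp add: subspace_diff subspace_scale)
  have x0y: "cinner x0 y = 0"
    unfolding y_def \<mu>_def cinner_diff_right cinner_scaleR_right x0(2)
    using hermitian_cinner_real[OF herm] by simp
  have yAx0: "cinner y (A *v x0) = cinner y y"
  proof -
    have "A *v x0 = y + \<mu> *\<^sub>R x0" unfolding y_def by simp
    moreover have "cinner y x0 = 0" using x0y cinner_commute[of y x0] by simp
    ultimately show ?thesis by (simp add: cinner_add_right cinner_scaleR_right)
  qed
  txt \<open>Along x0 + t y the quadratic form changes to first order by 2 t |y|^2, which the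
    maximality of x0 forces to vanish.\<close>
  have "Re (cinner y y) = 0"
  proof (rule linear_coeff_eq_0_if_quadratic_nonpos)
    fix t :: real
    define z where "z = x0 + t *\<^sub>R y"
    have "z \<in> S" unfolding z_def using S x0(1) \<open>y \<in> S\<close> by (simp add: subspace_add subspace_scale)
    have x0Ay: "cinner x0 (A *v y) = cnj (cinner y y)"
      using hermitian_cinner[OF herm, of x0 y] cinner_commute[of "A *v x0" y] yAx0 by simp
    have "cinner z (A *v z) = cinner x0 (A *v x0) + of_real t * (cinner x0 (A *v y) + cinner y (A *v x0))
        + of_real t * of_real t * cinner y (A *v y)"
      unfolding z_def matrix_vector_right_distrib matrix_vector_mult_scaleR_complex
        cinner_add_left cinner_add_right cinner_scaleR_left cinner_scaleR_right
      by (simp add: algebra_simps)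
    hence "Re (cinner z (A *v z)) = \<mu> + 2 * t * Re (cinner y y) + t\<^sup>2 * Re (cinner y (A *v y))"
      unfolding x0Ay yAx0 \<mu>_def by (simp add: power2_eq_square)
    moreover have "cinner z z = 1 + of_real t * of_real t * cinner y y"
      unfolding z_def cinner_add_left cinner_add_right cinner_scaleR_left cinner_scaleR_right
        x0(2) x0y cinner_commute[of y x0]
      by simp
    hence "Re (cinner z z) = 1 + t\<^sup>2 * Re (cinner y y)" by (simp add: power2_eq_square)
    ultimately have "\<mu> + 2 * t * Re (cinner y y) + t\<^sup>2 * Re (cinner y (A *v y))
        \<le> \<mu> * (1 + t\<^sup>2 * Re (cinner y y))"
      using max[OF \<open>z \<in> S\<close>] unfolding \<mu>_def by simp
    thus "2 * t * Re (cinner y y) + t\<^sup>2 * (Re (cinner y (A *v y)) - \<mu> * Re (cinner y y)) \<le> 0"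
      by (simp add: algebra_simps)
  qed
  hence "y = 0" by (simp add: cinner_self)
  thus ?thesis unfolding y_def \<mu>_def by simp
qed

lemma hermitian_eigenvector_in_invariant_subspace:
  fixes A :: "complex^'n^'n"
  assumes herm: "hermitian A" and S: "subspace S" and inv: "\<And>x. x \<in> S \<Longrightarrow> A *v x \<in> S"
    and "x1 \<in> S" "cinner x1 x1 = 1"
  obtains x \<mu> where "x \<in> S" "cinner x x = 1" "A *v x = \<mu> *\<^sub>R x"
proof -
  define K where "K = S \<inter> {x. cinner x x = 1}"
  define f where "f x = Re (cinner x (A *v x))" for x
  have "compact K"
  proof -
    have "{x. cinner x x = 1} = sphere 0 1" by (auto simp: cinner_self_eq_1)
    thus ?thesis unfolding K_def by (metis closed_Int_compact closed_subspace S compact_sphere)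
  qed
  moreover have "continuous_on K f" unfolding f_def by (intro continuous_intros)
  moreover have "x1 \<in> K" unfolding K_def using assms(4,5) by blast
  ultimately obtain x0 where "x0 \<in> K" and x0_max: "\<And>y. y \<in> K \<Longrightarrow> f y \<le> f x0"
    using continuous_attains_sup[of K f] by blast
  have homogeneous_max: "f z \<le> f x0 * Re (cinner z z)" if "z \<in> S" for z
  proof (cases "z = 0")
    case False
    have "z /\<^sub>R norm z \<in> K" unfolding K_def using S \<open>z \<in> S\<close> False
      by (simp add: subspace_scale cinner_self_eq_1)
    hence "f (z /\<^sub>R norm z) \<le> f x0" by (rule x0_max)
    moreover have "f z = (norm z)\<^sup>2 * f (z /\<^sub>R norm z)" "Re (cinner z z) = (norm z)\<^sup>2"
      using False by (simp_all add: f_def cinner_self matrix_vector_mult_scaleR_complex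
          cinner_scaleR_left cinner_scaleR_right power2_eq_square)
    ultimately show ?thesis by (simp add: mult.commute[of "f x0"] mult_left_mono)
  qed (simp add: f_def)
  have "x0 \<in> S" "cinner x0 x0 = 1" using \<open>x0 \<in> K\<close> by (simp_all add: K_def)
  moreover have "A *v x0 = Re (cinner x0 (A *v x0)) *\<^sub>R x0"
    using hermitian_max_quadratic_form_eigenvector[OF herm S inv \<open>x0 \<in> S\<close> \<open>cinner x0 x0 = 1\<close>]
      homogeneous_max unfolding f_def by blast
  ultimately show ?thesis by (rule that)
qed

definition orthonormal_on :: "'a set \<Rightarrow> ('a \<Rightarrow> complex^'n) \<Rightarrow> bool" where
  "orthonormal_on J v \<longleftrightarrow> (\<forall>i\<in>J. \<forall>j\<in>J. cinner (v i) (v j) = (if i = j then 1 else 0))"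

lemma orthonormal_on_norm: "orthonormal_on J v \<Longrightarrow> j \<in> J \<Longrightarrow> norm (v j) = 1"
  unfolding cinner_self_eq_1[symmetric] orthonormal_on_def by simp

lemma orthonormal_on_insert:
  assumes "orthonormal_on J v" "cinner x x = 1" "\<forall>j\<in>J. cinner (v j) x = 0"
  shows "orthonormal_on (insert k J) (v(k := x))"
  unfolding orthonormal_on_def
proof (intro ballI)
  fix i j assume "i \<in> insert k J" "j \<in> insert k J"
  then consider "i = k" "j = k" | "i = k" "j \<noteq> k" "j \<in> J" | "i \<noteq> k" "i \<in> J" "j = k"
    | "i \<noteq> k" "j \<noteq> k" "i \<in> J" "j \<in> J"
    by blast
  then show "cinner ((v(k := x)) i) ((v(k := x)) j) = (if i = j then 1 else 0)"
  proof cases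
    case 1
    then show ?thesis using assms(2) by simp
  next
    case 2
    have "cinner x (v j) = cnj (cinner (v j) x)" by (rule cinner_commute)
    then show ?thesis using 2 assms(3) by simp
  next
    case 3
    then show ?thesis using assms(3) by simp
  next
    case 4
    then show ?thesis using assms(1) unfolding orthonormal_on_def by simp
  qed
qed

lemma hermitian_eigenvector_orthogonal:
  fixes A :: "complex^'n^'n" and v :: "'n \<Rightarrow> complex^'n"
  assumes herm: "hermitian A" and "J \<noteq> UNIV" and eig: "\<And>j. j \<in> J \<Longrightarrow> A *v v j = d j *\<^sub>R v j"
  obtains x \<mu> where "cinner x x = 1" "\<forall>j\<in>J. cinner (v j) x = 0" "A *v x = \<mu> *\<^sub>R x"
proof -
  define S where "S = {x. \<forall>j\<in>J. cinner (v j) x = 0}"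
  have S: "subspace S"
    by (auto simp: S_def subspace_def cinner_add_right cinner_scaleR_right)
  have inv: "A *v x \<in> S" if "x \<in> S" for x
  proof -
    have "cinner (v j) (A *v x) = 0" if "j \<in> J" for j
      using \<open>x \<in> S\<close> that eig[OF that]
      by (simp add: S_def hermitian_cinner[OF herm, of "v j"] cinner_scaleR_left)
    thus ?thesis unfolding S_def by blast
  qed
  obtain x1 where "x1 \<in> S" "cinner x1 x1 = 1"
    using exists_unit_orthogonal[OF \<open>J \<noteq> UNIV\<close>, of v] unfolding S_def by blast
  then obtain x \<mu> where "x \<in> S" "cinner x x = 1" "A *v x = \<mu> *\<^sub>R x"
    using hermitian_eigenvector_in_invariant_subspace[OF herm S inv] by blast
  with that show ?thesis unfolding S_def by blast
qed

lemma hermitian_eigenbasis_extend: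
  fixes A :: "complex^'n^'n" and v :: "'n \<Rightarrow> complex^'n"
  assumes herm: "hermitian A" and "orthonormal_on J v" "\<And>j. j \<in> J \<Longrightarrow> A *v v j = d j *\<^sub>R v j"
  obtains w e where "\<And>j. j \<in> J \<Longrightarrow> w j = v j" "orthonormal_on UNIV w" "\<And>j. A *v w j = e j *\<^sub>R w j"
proof -
  have extend: "\<exists>w e. (\<forall>j\<in>J. w j = v j) \<and> orthonormal_on UNIV w \<and> (\<forall>j. A *v w j = e j *\<^sub>R w j)"
    if "finite K" "K = UNIV - J" "orthonormal_on J v" "\<And>j. j \<in> J \<Longrightarrow> A *v v j = d j *\<^sub>R v j"
    for K J and v :: "'n \<Rightarrow> complex^'n" and d
    using that
  proof (induction K arbitrary: J v d rule: finite_induct)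
    case empty
    then have "J = UNIV" by auto
    with empty.prems show ?case by (intro exI[of _ v] exI[of _ d]) auto
  next
    case (insert k K)
    have "k \<notin> J" using insert.prems(1) by blast
    hence "J \<noteq> UNIV" by blast
    then obtain x \<mu> where x: "cinner x x = 1" "\<forall>j\<in>J. cinner (v j) x = 0" "A *v x = \<mu> *\<^sub>R x"
      by (rule hermitian_eigenvector_orthogonal[OF herm _ insert.prems(3)])
    have "K = UNIV - insert k J" using insert.hyps(2) insert.prems(1) by auto
    moreover have "orthonormal_on (insert k J) (v(k := x))"
      using orthonormal_on_insert[OF insert.prems(2) x(1,2)] .
    moreover have "\<And>j. j \<in> insert k J \<Longrightarrow> A *v (v(k := x)) j = (d(k := \<mu>)) j *\<^sub>R (v(k := x)) j"
      using insert.prems(3) x(3) by auto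
    ultimately have "\<exists>w e. (\<forall>j\<in>insert k J. w j = (v(k := x)) j) \<and> orthonormal_on UNIV w
        \<and> (\<forall>j. A *v w j = e j *\<^sub>R w j)"
      by (rule insert.IH)
    then obtain w e where "\<forall>j\<in>insert k J. w j = (v(k := x)) j" "orthonormal_on UNIV w"
        "\<forall>j. A *v w j = e j *\<^sub>R w j"
      by blast
    thus ?case using \<open>k \<notin> J\<close> by (intro exI[of _ w] exI[of _ e]) auto
  qed
  have "finite (UNIV - J)" by simp
  from extend[OF this refl assms(2,3)] obtain w e
    where "\<forall>j\<in>J. w j = v j" "orthonormal_on UNIV w" "\<forall>j. A *v w j = e j *\<^sub>R w j"
    by blast
  then show ?thesis by (intro that) auto
qed

lemma hermitian_eigenbasis:
  fixes A :: "complex^'n^'n"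
  assumes "hermitian A"
  obtains v :: "'n \<Rightarrow> complex^'n" and d where "orthonormal_on UNIV v" "\<And>j. A *v v j = d j *\<^sub>R v j"
proof -
  have "orthonormal_on ({}::'n set) (undefined :: 'n \<Rightarrow> complex^'n)" by (simp add: orthonormal_on_def)
  then show ?thesis
  proof (rule hermitian_eigenbasis_extend[OF assms, where d = "\<lambda>_. 0"])
    fix w :: "'n \<Rightarrow> complex^'n" and e
    assume "orthonormal_on UNIV w" "\<And>j. A *v w j = e j *\<^sub>R w j"
    then show thesis by (rule that)
  qed simp
qed

lemma orthonormal_extend:
  fixes v :: "'n \<Rightarrow> complex^'n"
  assumes "orthonormal_on J v"
  obtains w where "\<And>j. j \<in> J \<Longrightarrow> w j = v j" "orthonormal_on UNIV w"
proof (rule hermitian_eigenbasis_extend[of 0 J v "\<lambda>_. 0"])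
  show "hermitian (0::complex^'n^'n)" by (simp add: hermitian_def adj_def vec_eq_iff)
  fix w assume "\<And>j. j \<in> J \<Longrightarrow> w j = v j" "orthonormal_on UNIV w"
  then show thesis by (rule that)
qed (simp_all add: assms)

section \<open>Positive square roots\<close>

definition colmat :: "('n \<Rightarrow> complex^'m) \<Rightarrow> complex^'n^'m" where
  "colmat v = (\<chi> i j. v j $ i)"

definition diagm :: "('n \<Rightarrow> real) \<Rightarrow> complex^'n^'n" where
  "diagm d = (\<chi> i j. if i = j then of_real (d i) else 0)"

lemma matrix_mul_colmat: "M ** colmat w = colmat (\<lambda>j. M *v w j)"
  unfolding colmat_def matrix_matrix_mult_def matrix_vector_mult_def vec_eq_iff by simp

lemma adj_colmat_mul_colmat: "adj (colmat v) ** colmat w = (\<chi> i j. cinner (v i) (w j))"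
  unfolding colmat_def matrix_matrix_mult_def cinner_def vec_eq_iff by simp

lemma adj_colmat_mult_vec: "adj (colmat v) *v x = (\<chi> i. cinner (v i) x)"
  unfolding colmat_def matrix_vector_mult_def cinner_def vec_eq_iff by simp

lemma colmat_mult_axis: "colmat v *v axis j 1 = v j"
  unfolding colmat_def matrix_vector_mult_def axis_def vec_eq_iff
  by (simp add: if_distrib[of "\<lambda>x. _ * x"] sum.delta' cong: if_cong)

lemma colmat_mul_diagm: "colmat v ** diagm d = colmat (\<lambda>j. d j *\<^sub>R v j)"
  unfolding colmat_def diagm_def matrix_matrix_mult_def vec_eq_iff
  by (simp add: if_distrib[of "\<lambda>x. _ * x"] sum.delta' scaleR_conv_of_real[where 'a=complex]
      mult.commute cong: if_cong)

lemma diagm_mul_diagm: "diagm a ** diagm b = diagm (\<lambda>i. a i * b i)"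
  unfolding diagm_def matrix_matrix_mult_def vec_eq_iff
  by (simp add: if_distrib[of "\<lambda>x. x * _"] sum.delta cong: if_cong)

lemma adj_diagm [simp]: "adj (diagm d) = diagm d"
  unfolding diagm_def adj_def vec_eq_iff by simp

lemma unitary_colmat:
  assumes "orthonormal_on UNIV v" shows "unitary (colmat v)"
proof -
  have "adj (colmat v) ** colmat v = mat 1"
    using assms unfolding adj_colmat_mul_colmat mat_def orthonormal_on_def by (simp add: vec_eq_iff)
  thus ?thesis unfolding unitary_def using matrix_left_right_inverse by blast
qed

lemma unitary_adj: "unitary U \<Longrightarrow> unitary (adj U)"
  unfolding unitary_def by simp

lemma unitary_mult: "unitary U \<Longrightarrow> unitary V \<Longrightarrow> unitary (U ** V)"
  unfolding unitary_def adj_mult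
  by (simp add: matrix_mul_assoc[symmetric]) (simp add: matrix_mul_assoc)

lemma unitary_mul_right_cancel:
  assumes "unitary U" "A ** U = B ** U" shows "A = B"
  by (metis assms matrix_mul_assoc matrix_mul_rid unitary_def)

lemma eigenbasis_decomposition:
  fixes A :: "complex^'n^'n" and v :: "'n \<Rightarrow> complex^'n"
  assumes on: "orthonormal_on UNIV v" and eig: "\<And>j. A *v v j = d j *\<^sub>R v j"
  shows "A = colmat v ** diagm d ** adj (colmat v)"
proof (rule unitary_mul_right_cancel[OF unitary_colmat[OF on]])
  have "A ** colmat v = colmat v ** diagm d"
    unfolding matrix_mul_colmat colmat_mul_diagm eig ..
  also have "\<dots> = colmat v ** diagm d ** adj (colmat v) ** colmat v"
    using unitary_colmat[OF on] unfolding unitary_def by (simp add: matrix_mul_assoc[symmetric])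
  finally show "A ** colmat v = colmat v ** diagm d ** adj (colmat v) ** colmat v" .
qed

lemma psd_iff_cinner:
  "psd A \<longleftrightarrow> hermitian A \<and> (\<forall>x. Im (cinner x (A *v x)) = 0 \<and> 0 \<le> Re (cinner x (A *v x)))"
  unfolding psd_def cinner_def Let_def ..

lemma psd_adj: "psd A \<Longrightarrow> adj A = A"
  unfolding psd_def hermitian_def by blast

lemma psd_cinner_nonneg: "psd A \<Longrightarrow> 0 \<le> Re (cinner x (A *v x))"
  unfolding psd_iff_cinner by blast

lemma psd_mul_adj_conj:
  assumes "psd B" shows "psd (Y ** B ** adj Y)"
  unfolding psd_iff_cinner hermitian_def
proof (intro conjI allI)
  show "adj (Y ** B ** adj Y) = Y ** B ** adj Y"
    unfolding adj_mult adj_adj psd_adj[OF assms] by (simp add: matrix_mul_assoc)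
  fix x
  have "cinner x ((Y ** B ** adj Y) *v x) = cinner (adj Y *v x) (B *v (adj Y *v x))"
    by (simp add: cinner_adj matrix_vector_mul_assoc[symmetric])
  thus "Im (cinner x ((Y ** B ** adj Y) *v x)) = 0" "0 \<le> Re (cinner x ((Y ** B ** adj Y) *v x))"
    using assms unfolding psd_iff_cinner by simp_all
qed

lemma psd_diagm:
  fixes d :: "'n::finite \<Rightarrow> real"
  assumes "\<And>i. 0 \<le> d i" shows "psd (diagm d)"
  unfolding psd_iff_cinner hermitian_def
proof (intro conjI allI)
  fix x :: "complex^'n"
  have "cinner x (diagm d *v x) = of_real (\<Sum>i\<in>UNIV. d i * (cmod (x $ i))\<^sup>2)"
    unfolding cinner_def diagm_def matrix_vector_mult_def of_real_sum
    by (intro sum.cong refl)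
      (simp add: if_distrib[of "\<lambda>y. _ * y"] sum.delta' mult_ac flip: complex_norm_square cong: if_cong)
  thus "Im (cinner x (diagm d *v x)) = 0" "0 \<le> Re (cinner x (diagm d *v x))"
    using assms by (simp_all add: sum_nonneg)
qed simp

lemma psd_mul_adj:
  fixes X :: "complex^'m^'n"
  shows "psd (X ** adj X)"
  unfolding psd_iff_cinner hermitian_def
proof (intro conjI allI)
  fix x
  have "cinner x ((X ** adj X) *v x) = of_real ((norm (adj X *v x))\<^sup>2)"
    by (simp add: cinner_adj[of x X] matrix_vector_mul_assoc[symmetric] cinner_self del: of_real_power)
  thus "Im (cinner x ((X ** adj X) *v x)) = 0" "0 \<le> Re (cinner x ((X ** adj X) *v x))"
    by simp_all
qed (simp add: adj_mult)

lemma psd_eigenvalue_nonneg: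
  assumes "psd A" "cinner v v = 1" "A *v v = d *\<^sub>R v"
  shows "0 \<le> d"
  using psd_cinner_nonneg[OF assms(1), of v] assms(2,3) by (simp add: cinner_scaleR_right)

lemma psd_eigenbasis:
  fixes A :: "complex^'n^'n"
  assumes "psd A"
  obtains v :: "'n \<Rightarrow> complex^'n" and d where "orthonormal_on UNIV v"
    "\<And>j. A *v v j = d j *\<^sub>R v j" "\<And>j. 0 \<le> d j"
proof -
  obtain v :: "'n \<Rightarrow> complex^'n" and d where on: "orthonormal_on UNIV v"
    and eig: "\<And>j. A *v v j = d j *\<^sub>R v j"
    using hermitian_eigenbasis assms psd_def by metis
  moreover have "0 \<le> d j" for j
    using psd_eigenvalue_nonneg[OF assms _ eig] on by (simp add: orthonormal_on_def)
  ultimately show ?thesis by (rule that)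
qed

lemma psd_sqrt_exists:
  fixes A :: "complex^'n^'n"
  assumes "psd A" shows "\<exists>B. psd B \<and> B ** B = A"
proof -
  obtain v :: "'n \<Rightarrow> complex^'n" and d where on: "orthonormal_on UNIV v"
    and eig: "\<And>j. A *v v j = d j *\<^sub>R v j" and d: "\<And>j. 0 \<le> d j"
    using psd_eigenbasis[OF assms] by blast
  define U where "U = colmat v"
  define B where "B = U ** diagm (\<lambda>j. sqrt (d j)) ** adj U"
  have "psd B" unfolding B_def by (intro psd_mul_adj_conj psd_diagm) (simp add: d)
  moreover have "B ** B = U ** (diagm (\<lambda>j. sqrt (d j)) ** (adj U ** U) ** diagm (\<lambda>j. sqrt (d j))) ** adj U"
    unfolding B_def by (simp add: matrix_mul_assoc)
  hence "B ** B = U ** diagm d ** adj U"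
    using unitary_colmat[OF on] d by (simp add: U_def unitary_def diagm_mul_diagm)
  ultimately show ?thesis
    using eigenbasis_decomposition[OF on eig] unfolding U_def by auto
qed

lemma psd_eigenvector_of_square:
  assumes B: "psd B" and "0 \<le> g" and BBw: "B *v (B *v w) = g\<^sup>2 *\<^sub>R w"
  shows "B *v w = g *\<^sub>R w"
proof (cases "g = 0")
  case True
  have "cinner (B *v w) (B *v w) = cinner w (B *v (B *v w))"
    by (simp add: cinner_adj psd_adj[OF B])
  thus ?thesis using BBw True by (simp add: cinner_self_eq_0)
next
  case False
  define y where "y = B *v w - g *\<^sub>R w"
  have "B *v y = (- g) *\<^sub>R y"
    unfolding y_def using BBw
    by (simp add: matrix_vector_mult_diff_distrib matrix_vector_mult_scaleR_complex
        algebra_simps power2_eq_square)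
  hence "Re (cinner y (B *v y)) = - g * (norm y)\<^sup>2"
    by (simp only: cinner_scaleR_right cinner_self) simp
  hence "g * (norm y)\<^sup>2 \<le> 0" using psd_cinner_nonneg[OF B, of y] by simp
  hence "y = 0" using \<open>0 \<le> g\<close> False by (simp add: mult_le_0_iff)
  thus ?thesis unfolding y_def by simp
qed

lemma psd_sqrt_unique:
  fixes B C :: "complex^'n^'n"
  assumes B: "psd B" and C: "psd C" and eq: "B ** B = C ** C"
  shows "B = C"
proof -
  obtain v :: "'n \<Rightarrow> complex^'n" and c where on: "orthonormal_on UNIV v"
    and eig: "\<And>j. C *v v j = c j *\<^sub>R v j" and c: "\<And>j. 0 \<le> c j"
    using psd_eigenbasis[OF C] by blast
  have "B *v v j = c j *\<^sub>R v j" for j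
  proof (rule psd_eigenvector_of_square[OF B c])
    have "B *v (B *v v j) = C *v (C *v v j)"
      by (simp add: matrix_vector_mul_assoc eq)
    thus "B *v (B *v v j) = (c j)\<^sup>2 *\<^sub>R v j"
      by (simp add: eig matrix_vector_mult_scaleR_complex power2_eq_square)
  qed
  hence "B ** colmat v = C ** colmat v" unfolding matrix_mul_colmat by (simp add: eig)
  thus ?thesis by (rule unitary_mul_right_cancel[OF unitary_colmat[OF on]])
qed

lemma msqrt_spec:
  assumes "psd A" shows "psd (msqrt A) \<and> msqrt A ** msqrt A = A"
  unfolding msqrt_def
  by (rule theI') (use psd_sqrt_exists[OF assms] psd_sqrt_unique in blast)

lemma adj_msqrt: "psd A \<Longrightarrow> adj (msqrt A) = msqrt A"
  using msqrt_spec psd_adj by blast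

section \<open>Trace norm\<close>

lemma mtrace_orthonormal_basis:
  fixes v :: "'n \<Rightarrow> complex^'n"
  assumes "orthonormal_on UNIV v"
  shows "mtrace M = (\<Sum>j\<in>UNIV. cinner (v j) (M *v v j))"
proof -
  have "mtrace M = mtrace ((M ** colmat v) ** adj (colmat v))"
    using unitary_colmat[OF assms] by (simp add: unitary_def matrix_mul_assoc[symmetric])
  also have "\<dots> = mtrace (adj (colmat v) ** (M ** colmat v))" by (rule mtrace_mult_commute)
  also have "\<dots> = (\<Sum>j\<in>UNIV. cinner (v j) (M *v v j))"
    unfolding matrix_mul_colmat[of M] adj_colmat_mul_colmat mtrace_def by simp
  finally show ?thesis .
qed

text \<open>On matrices, norm is the Frobenius (Hilbert-Schmidt) norm.\<close>
lemma norm_matrix_power2: "(norm (C::complex^'n^'m))\<^sup>2 = Re (mtrace (C ** adj C))"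
proof -
  have "mtrace (C ** adj C) = (\<Sum>i\<in>UNIV. cinner (C $ i) (C $ i))"
    unfolding mtrace_def matrix_matrix_mult_def cinner_def by (simp add: mult.commute)
  also have "\<dots> = of_real ((norm C)\<^sup>2)"
    unfolding cinner_self norm_vec_power2[of C] of_real_sum ..
  finally show ?thesis by simp
qed

lemma norm_adj: "norm (adj C) = norm (C::complex^'n^'m)"
proof -
  have "(norm (adj C))\<^sup>2 = (norm C)\<^sup>2"
    unfolding norm_matrix_power2 adj_adj by (simp add: mtrace_mult_commute[of "adj C"])
  thus ?thesis by (simp add: power2_eq_iff_nonneg)
qed

lemma norm_mtrace_mult_le: "cmod (mtrace (C ** D)) \<le> norm C * norm (D::complex^'n^'m)"
proof -
  have "mtrace (C ** D) = (\<Sum>i\<in>UNIV. \<Sum>k\<in>UNIV. C $ i $ k * D $ k $ i)"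
    unfolding mtrace_def matrix_matrix_mult_def by simp
  also have "\<dots> = (\<Sum>k\<in>UNIV. cinner (adj C $ k) (D $ k))"
    unfolding cinner_def by (subst sum.swap) simp
  finally have "cmod (mtrace (C ** D)) \<le> (\<Sum>k\<in>UNIV. cmod (cinner (adj C $ k) (D $ k)))"
    by (simp add: norm_sum)
  also have "\<dots> \<le> (\<Sum>k\<in>UNIV. norm (adj C $ k) * norm (D $ k))"
    by (intro sum_mono norm_cinner_le)
  also have "\<dots> \<le> norm (adj C) * norm D" by (rule sum_norm_mult_le)
  finally show ?thesis unfolding norm_adj .
qed

lemma norm_unitary_mul:
  assumes "unitary U" shows "norm (U ** Z) = norm (Z::complex^'m^'n)"
proof -
  have "(norm (U ** Z))\<^sup>2 = Re (mtrace (U ** (Z ** adj Z ** adj U)))"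
    unfolding norm_matrix_power2 adj_mult by (simp add: matrix_mul_assoc)
  also have "\<dots> = Re (mtrace ((Z ** adj Z ** adj U) ** U))"
    by (rule arg_cong[where f = Re, OF mtrace_mult_commute])
  also have "\<dots> = (norm Z)\<^sup>2"
    using assms unfolding unitary_def norm_matrix_power2 by (simp add: matrix_mul_assoc[symmetric])
  finally show ?thesis by (simp add: power2_eq_iff_nonneg)
qed

lemma norm_mul_unitary:
  assumes "unitary V" shows "norm (Z ** V) = norm (Z::complex^'n^'m)"
  by (metis adj_mult assms norm_adj norm_unitary_mul unitary_adj)

lemma norm_unitary_mult_vec:
  assumes "unitary W" shows "norm (W *v x) = norm x"
proof -
  have "cinner (W *v x) (W *v x) = cinner x x"
    using assms by (simp add: cinner_adj[of "W *v x"] matrix_vector_mul_assoc unitary_def)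
  thus ?thesis unfolding cinner_self of_real_eq_iff by (simp add: power2_eq_iff_nonneg)
qed

lemma norm_id_minus_unitary_mul_le:
  assumes "unitary U" shows "norm ((mat 1 - U) ** Z) \<le> 2 * norm (Z::complex^'m^'n)"
proof -
  have "norm ((mat 1 - U) ** Z) \<le> norm Z + norm (U ** Z)"
    unfolding matrix_diff_rdistrib matrix_mul_lid by (rule norm_triangle_ineq4)
  thus ?thesis unfolding norm_unitary_mul[OF assms] by simp
qed

definition trace_norm :: "complex^'n^'n \<Rightarrow> real" where
  "trace_norm X = Re (mtrace (msqrt (X ** adj X)))"

lemma singular_value_basis:
  fixes X :: "complex^'n^'n"
  obtains v :: "'n \<Rightarrow> complex^'n" and s where "orthonormal_on UNIV v" "\<And>j. 0 \<le> s j"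
    "\<And>i j. cinner (adj X *v v i) (adj X *v v j) = (if i = j then of_real ((s j)\<^sup>2) else 0)"
    "\<And>j. norm (adj X *v v j) = s j"
    "trace_norm X = (\<Sum>j\<in>UNIV. s j)"
proof -
  define S where "S = msqrt (X ** adj X)"
  have psdS: "psd S" and SS: "S ** S = X ** adj X"
    using msqrt_spec[OF psd_mul_adj[of X]] by (simp_all add: S_def)
  obtain v :: "'n \<Rightarrow> complex^'n" and s where on: "orthonormal_on UNIV v"
    and eig: "\<And>j. S *v v j = s j *\<^sub>R v j" and s: "\<And>j. 0 \<le> s j"
    using psd_eigenbasis[OF psdS] by blast
  have vv: "cinner (v i) (v j) = (if i = j then 1 else 0)" for i j
    using on unfolding orthonormal_on_def by blast
  have gram: "cinner (adj X *v v i) (adj X *v v j) = (if i = j then of_real ((s j)\<^sup>2) else 0)" for i j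
  proof -
    have "cinner (adj X *v v i) (adj X *v v j) = cinner (v i) ((S ** S) *v v j)"
      unfolding SS by (simp add: cinner_adj[of "v i" X] matrix_vector_mul_assoc[symmetric])
    thus ?thesis
      by (simp add: matrix_vector_mul_assoc[symmetric] eig matrix_vector_mult_scaleR_complex
          cinner_scaleR_right vv power2_eq_square)
  qed
  have "norm (adj X *v v j) = s j" for j
    using gram[of j j] s[of j] by (simp add: cinner_self power2_eq_iff_nonneg del: of_real_power)
  moreover have "trace_norm X = (\<Sum>j\<in>UNIV. s j)"
    unfolding trace_norm_def S_def[symmetric] mtrace_orthonormal_basis[OF on, of S]
    by (simp add: eig cinner_scaleR_right vv)
  ultimately show ?thesis using that on s gram by blast
qed

lemma mtrace_mul_orthonormal_basis:
  fixes X W :: "complex^'n^'n" and v :: "'n \<Rightarrow> complex^'n"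
  assumes "orthonormal_on UNIV v"
  shows "mtrace (X ** W) = (\<Sum>j\<in>UNIV. cinner (adj X *v v j) (W *v v j))"
  unfolding mtrace_orthonormal_basis[OF assms]
  by (intro sum.cong refl) (simp add: cinner_adj[of "v _" X] matrix_vector_mul_assoc[symmetric])

lemma Re_mtrace_mul_unitary_le:
  fixes X W :: "complex^'n^'n"
  assumes "unitary W" shows "Re (mtrace (X ** W)) \<le> trace_norm X"
proof -
  obtain v :: "'n \<Rightarrow> complex^'n" and s where on: "orthonormal_on UNIV v"
    and norm: "\<And>j. norm (adj X *v v j) = s j" and tn: "trace_norm X = (\<Sum>j\<in>UNIV. s j)"
    by (rule singular_value_basis[of X]) blast
  have "Re (mtrace (X ** W)) = (\<Sum>j\<in>UNIV. Re (cinner (adj X *v v j) (W *v v j)))"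
    unfolding mtrace_mul_orthonormal_basis[OF on] by simp
  also have "\<dots> \<le> (\<Sum>j\<in>UNIV. norm (adj X *v v j) * norm (W *v v j))"
    by (intro sum_mono order_trans[OF complex_Re_le_cmod norm_cinner_le])
  also have "\<dots> = trace_norm X"
    using on by (simp add: tn norm norm_unitary_mult_vec[OF assms] orthonormal_on_norm)
  finally show ?thesis .
qed

lemma trace_norm_attained:
  fixes X :: "complex^'n^'n"
  obtains V where "unitary V" "Re (mtrace (X ** V)) = trace_norm X"
proof -
  obtain v :: "'n \<Rightarrow> complex^'n" and s where on: "orthonormal_on UNIV v" and s: "\<And>j. 0 \<le> s j"
    and gram: "\<And>i j. cinner (adj X *v v i) (adj X *v v j) = (if i = j then of_real ((s j)\<^sup>2) else 0)"
    and norm: "\<And>j. norm (adj X *v v j) = s j" and tn: "trace_norm X = (\<Sum>j\<in>UNIV. s j)"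
    by (rule singular_value_basis[of X]) blast
  txt \<open>The maximiser is the polar factor sending v j to the normalised adj X *v v j.\<close>
  define J where "J = {j. 0 < s j}"
  define f where "f j = (1 / s j) *\<^sub>R (adj X *v v j)" for j
  have "orthonormal_on J f"
    unfolding orthonormal_on_def f_def J_def
    by (simp add: cinner_scaleR_left cinner_scaleR_right gram power2_eq_square)
  then obtain F where F: "\<And>j. j \<in> J \<Longrightarrow> F j = f j" "orthonormal_on UNIV F"
    by (rule orthonormal_extend) blast
  define V where "V = colmat F ** adj (colmat v)"
  have "unitary V" unfolding V_def
    by (intro unitary_mult unitary_adj unitary_colmat F(2) on)
  have VvF: "V *v v j = F j" for j
  proof -
    have "adj (colmat v) *v v j = axis j 1"
      using on by (simp add: adj_colmat_mult_vec orthonormal_on_def axis_def vec_eq_iff)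
    thus ?thesis unfolding V_def by (simp add: matrix_vector_mul_assoc[symmetric] colmat_mult_axis)
  qed
  have "cinner (adj X *v v j) (V *v v j) = of_real (s j)" for j
  proof (cases "0 < s j")
    case True
    hence "adj X *v v j = s j *\<^sub>R F j" by (simp add: F(1) J_def f_def)
    thus ?thesis using F(2) by (simp add: VvF cinner_scaleR_left orthonormal_on_def)
  next
    case False
    hence "adj X *v v j = 0" using s[of j] norm[of j] by simp
    thus ?thesis using False s[of j] by simp
  qed
  hence "Re (mtrace (X ** V)) = trace_norm X"
    unfolding mtrace_mul_orthonormal_basis[OF on] tn by simp
  with \<open>unitary V\<close> show ?thesis by (rule that)
qed

lemma trace_norm_diff_le:
  fixes X Y :: "complex^'n^'n"
  assumes "X - Y = C ** D"
  shows "trace_norm X - trace_norm Y \<le> norm C * norm D"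
proof -
  obtain V where V: "unitary V" "Re (mtrace (X ** V)) = trace_norm X"
    by (rule trace_norm_attained)
  have "trace_norm X - trace_norm Y \<le> Re (mtrace (X ** V)) - Re (mtrace (Y ** V))"
    using V Re_mtrace_mul_unitary_le[OF V(1), of Y] by linarith
  also have "\<dots> = Re (mtrace ((X - Y) ** V))"
    by (simp add: matrix_diff_rdistrib mtrace_diff)
  also have "\<dots> = Re (mtrace (C ** (D ** V)))"
    by (simp add: assms matrix_mul_assoc)
  also have "\<dots> \<le> norm C * norm (D ** V)"
    using complex_Re_le_cmod norm_mtrace_mult_le by (rule order_trans)
  finally show ?thesis unfolding norm_mul_unitary[OF V(1)] .
qed

lemma root_fid_eq_trace_norm:
  assumes "psd \<rho>" shows "root_fid \<rho> (B ** adj B) = trace_norm (msqrt \<rho> ** B)"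
  unfolding root_fid_def trace_norm_def adj_mult adj_msqrt[OF assms]
  by (simp add: matrix_mul_assoc)

lemma norm_proj_mul_msqrt:
  assumes "proj P" "psd \<rho>" shows "norm (P ** msqrt \<rho>) = sqrt (Re (mtrace (P ** \<rho>)))"
proof -
  have P: "P ** P = P" "adj P = P" using assms(1) by (simp_all add: proj_def)
  have "P ** msqrt \<rho> ** adj (P ** msqrt \<rho>) = P ** (msqrt \<rho> ** msqrt \<rho>) ** P"
    by (simp add: adj_mult adj_msqrt[OF assms(2)] P(2) matrix_mul_assoc)
  also have "\<dots> = P ** \<rho> ** P" using msqrt_spec[OF assms(2)] by simp
  finally have "(norm (P ** msqrt \<rho>))\<^sup>2 = Re (mtrace (P ** (P ** \<rho>)))"
    unfolding norm_matrix_power2 by (simp add: mtrace_mult_commute[of "P ** \<rho>"])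
  also have "\<dots> = Re (mtrace (P ** \<rho>))" by (simp add: matrix_mul_assoc P(1))
  finally show ?thesis by (simp add: real_sqrt_unique)
qed

lemma id_minus_unitary_factor_proj:
  assumes "P ** (U - mat 1) = U - mat 1" "P ** U = U ** P"
  shows "A ** B - A ** (U ** B) = (A ** P) ** ((mat 1 - U) ** (P ** (B::complex^'k^'n)))"
proof -
  have "P ** (mat 1 - U) = mat 1 - U" "(mat 1 - U) ** P = mat 1 - U"
    using assms by (simp_all add: matrix_diff_ldistrib matrix_diff_rdistrib algebra_simps)
  hence "A ** B - A ** (U ** B) = A ** (P ** (mat 1 - U) ** P) ** B"
    by (simp add: matrix_diff_ldistrib matrix_diff_rdistrib matrix_mul_assoc)
  thus ?thesis by (simp add: matrix_mul_assoc)
qed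

theorem lemma8:
  fixes U P \<rho> \<sigma> :: "complex^'n^'n"
  assumes "unitary U" and "proj P"
    and "P ** (U - mat 1) = U - mat 1"
    and "P ** U = U ** P"
    and "density \<rho>" and "density \<sigma>"
  shows "root_fid \<rho> \<sigma> - root_fid \<rho> (U ** \<sigma> ** adj U)
           \<le> 2 * sqrt (Re (mtrace (P ** \<rho>)) * Re (mtrace (P ** \<sigma>)))"
proof -
  have psd: "psd \<rho>" "psd \<sigma>" using assms(5,6) by (simp_all add: density_def)
  define A B where "A = msqrt \<rho>" and "B = msqrt \<sigma>"
  have B: "B ** B = \<sigma>" "adj B = B"
    using msqrt_spec[OF psd(2)] adj_msqrt[OF psd(2)] by (simp_all add: B_def)
  have "\<sigma> = B ** adj B" "U ** \<sigma> ** adj U = (U ** B) ** adj (U ** B)"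
    unfolding B(1)[symmetric] by (simp_all add: adj_mult B(2) matrix_mul_assoc)
  hence "root_fid \<rho> \<sigma> - root_fid \<rho> (U ** \<sigma> ** adj U)
      = trace_norm (A ** B) - trace_norm (A ** (U ** B))"
    by (simp add: A_def root_fid_eq_trace_norm[OF psd(1)])
  also have "\<dots> \<le> norm (A ** P) * norm ((mat 1 - U) ** (P ** B))"
    using id_minus_unitary_factor_proj[OF assms(3,4)] by (rule trace_norm_diff_le)
  also have "\<dots> \<le> norm (P ** A) * (2 * norm (P ** B))"
    using norm_adj[of "A ** P"] assms(2) adj_msqrt[OF psd(1)]
    by (simp add: A_def adj_mult proj_def mult_left_mono norm_id_minus_unitary_mul_le[OF assms(1)])
  also have "\<dots> = 2 * sqrt (Re (mtrace (P ** \<rho>)) * Re (mtrace (P ** \<sigma>)))"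
    using norm_proj_mul_msqrt[OF assms(2)] psd by (simp add: A_def B_def real_sqrt_mult)
  finally show ?thesis .
qed

end
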